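(* Let $S\subseteq\mathbb{N}^{\mathbb{N}}$. Then $S$ is guessable if and only if $S$ is $\mathbf{\Delta}^0_2$.
   Context: A function $G:\mathbb{N}^{<\mathbb{N}}\to\{0,1\}$ ($\mathbb{N}^{<\mathbb{N}}$ = finite sequences of naturals) is a guesser for $S\subseteq\mathbb{N}^{\mathbb{N}}$ if for every $f:\mathbb{N}\to\mathbb{N}$ there is $m>0$ such that for all $n>m$, $G(f(0),\ldots,f(n))$ equals $1$ if $f\in S$ and $0$ if $f\notin S$; $S$ is guessable if it has a guesser. $\mathbb{N}^{\mathbb{N}}$ carries the (Baire space) topology whose basic open sets are $\{f\in\mathbb{N}^{\mathbb{N}}: f \text{ extends } f_0\}$ for $f_0\in\mathbb{N}^{<\mathbb{N}}$. A set is $\mathbf{\Delta}^0_2$ if it is both $G_\delta$ (a countable intersection of open sets) and $F_\sigma$ (a countable union of closed sets). *)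

theory Defs
  imports Main
begin

text \<open>Finite sequences of naturals are lists; the values 0/1 of a guesser are rendered
  as False/True.  \<open>G (map f [0..<Suc n])\<close> is G(f(0),...,f(n)).\<close>

definition guesser :: "(nat list \<Rightarrow> bool) \<Rightarrow> (nat \<Rightarrow> nat) set \<Rightarrow> bool" where
  "guesser G S \<longleftrightarrow>
     (\<forall>f. \<exists>m>0. \<forall>n>m. G (map f [0..<Suc n]) = (f \<in> S))"

definition guessable :: "(nat \<Rightarrow> nat) set \<Rightarrow> bool" where
  "guessable S \<longleftrightarrow> (\<exists>G. guesser G S)"

definition basic_open :: "nat list \<Rightarrow> (nat \<Rightarrow> nat) set" where
  "basic_open s = {f. \<forall>i<length s. f i = s ! i}"

definition baire_open :: "(nat \<Rightarrow> nat) set \<Rightarrow> bool" where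
  "baire_open U \<longleftrightarrow> (\<exists>B. U = \<Union> (basic_open ` B))"

definition baire_closed :: "(nat \<Rightarrow> nat) set \<Rightarrow> bool" where
  "baire_closed C \<longleftrightarrow> baire_open (- C)"

definition baire_G_delta :: "(nat \<Rightarrow> nat) set \<Rightarrow> bool" where
  "baire_G_delta S \<longleftrightarrow> (\<exists>U :: nat \<Rightarrow> (nat \<Rightarrow> nat) set. (\<forall>i. baire_open (U i)) \<and> S = (\<Inter>i. U i))"

definition baire_F_sigma :: "(nat \<Rightarrow> nat) set \<Rightarrow> bool" where
  "baire_F_sigma S \<longleftrightarrow> (\<exists>C :: nat \<Rightarrow> (nat \<Rightarrow> nat) set. (\<forall>i. baire_closed (C i)) \<and> S = (\<Union>i. C i))"

definition baire_Delta02 :: "(nat \<Rightarrow> nat) set \<Rightarrow> bool" where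
  "baire_Delta02 S \<longleftrightarrow> baire_G_delta S \<and> baire_F_sigma S"

end

theory Submission
  imports Defs
begin

text \<open>A guesser for \<open>S\<close> answers correctly on all long prefixes of every \<open>f\<close>, so \<open>f \<in> S\<close> iff the
  guess is 1 infinitely often (a \<open>G\<^sub>\<delta>\<close> condition) iff it is eventually 1 (an \<open>F\<^sub>\<sigma>\<close> condition).
  Conversely, if \<open>S = \<Inter>U\<^sub>i = \<Union>C\<^sub>i\<close>, the closed sets \<open>C\<^sub>i\<close> and \<open>-U\<^sub>i\<close> cover the space and each lies
  inside \<open>S\<close> or outside it. Enumerate them as \<open>E\<^sub>k\<close> and guess, on a finite sequence \<open>s\<close>, whether
  the first \<open>E\<^sub>k\<close> meeting the neighbourhood of \<open>s\<close> lies in \<open>S\<close>: along \<open>f\<close> the neighbourhoods shrink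
  to \<open>f\<close>, so the finitely many closed \<open>E\<^sub>k\<close> before the first one containing \<open>f\<close> are eventually
  missed, and the guess stabilises to the right answer.\<close>

lemma basic_open_prefix_iff:
  "f \<in> basic_open s \<and> length s = n \<longleftrightarrow> s = map f [0..<n]"
  unfolding basic_open_def by (auto intro: nth_equalityI)

lemma mem_basic_open_prefix: "f \<in> basic_open (map f [0..<n])"
  using basic_open_prefix_iff by blast

lemma baire_open_exists_prefix:
  "baire_open {f. \<exists>n>m. P (map f [0..<Suc n])}"
proof -
  have "{f. \<exists>n>m. P (map f [0..<Suc n])} =
        \<Union> (basic_open ` {s. \<exists>n>m. length s = Suc n \<and> P s})"
  proof (intro equalityI subsetI)
    fix f
    assume "f \<in> {f. \<exists>n>m. P (map f [0..<Suc n])}"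
    then obtain n where "n > m" "P (map f [0..<Suc n])"
      by blast
    moreover have "f \<in> basic_open (map f [0..<Suc n])"
      by (rule mem_basic_open_prefix)
    ultimately show "f \<in> \<Union> (basic_open ` {s. \<exists>n>m. length s = Suc n \<and> P s})"
      by force
  next
    fix f
    assume "f \<in> \<Union> (basic_open ` {s. \<exists>n>m. length s = Suc n \<and> P s})"
    then obtain s n where "n > m" "length s = Suc n" "P s" "f \<in> basic_open s"
      by blast
    moreover from this have "s = map f [0..<Suc n]"
      using basic_open_prefix_iff by blast
    ultimately show "f \<in> {f. \<exists>n>m. P (map f [0..<Suc n])}"
      by blast
  qed
  then show ?thesis
    unfolding baire_open_def by blast
qed

lemma baire_closed_forall_prefix:
  "baire_closed {f. \<forall>n>m. P (map f [0..<Suc n])}"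
  using baire_open_exists_prefix[of m "\<lambda>s. \<not> P s"]
  unfolding baire_closed_def Collect_neg_eq[symmetric] by simp

lemma guesser_iff_eventually:
  "guesser G S \<longleftrightarrow> (\<forall>f. \<forall>\<^sub>F n in sequentially. G (map f [0..<Suc n]) = (f \<in> S))"
proof -
  have positive_threshold_iff:
    "(\<exists>m>0. \<forall>n>m. P n) \<longleftrightarrow> (\<exists>N. \<forall>n\<ge>N. P n)" for P :: "nat \<Rightarrow> bool"
  proof
    assume "\<exists>m>0. \<forall>n>m. P n"
    then obtain m where "\<forall>n>m. P n"
      by blast
    then have "\<forall>n\<ge>Suc m. P n"
      by simp
    then show "\<exists>N. \<forall>n\<ge>N. P n" ..
  next
    assume "\<exists>N. \<forall>n\<ge>N. P n"
    then obtain N where "\<forall>n\<ge>N. P n" ..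
    then have "\<forall>n>Suc N. P n"
      by simp
    then show "\<exists>m>0. \<forall>n>m. P n"
      using zero_less_Suc by blast
  qed
  then show ?thesis
    unfolding guesser_def eventually_sequentially by (simp only: positive_threshold_iff)
qed

lemma guesser_eq_Inter_frequently:
  assumes "guesser G S"
  shows "S = (\<Inter>m. {f. \<exists>n>m. G (map f [0..<Suc n])})"
proof (intro set_eqI iffI)
  fix f
  obtain N where N: "\<And>n. n \<ge> N \<Longrightarrow> G (map f [0..<Suc n]) = (f \<in> S)"
    using assms unfolding guesser_iff_eventually eventually_sequentially by blast
  show "f \<in> S" if "f \<in> (\<Inter>m. {f. \<exists>n>m. G (map f [0..<Suc n])})"
  proof -
    from that obtain n where "n > N" "G (map f [0..<Suc n])"
      by blast
    with N show ?thesis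
      by simp
  qed
  show "f \<in> (\<Inter>m. {f. \<exists>n>m. G (map f [0..<Suc n])})" if "f \<in> S"
  proof (intro InterI CollectI, clarify)
    fix m
    show "\<exists>n>m. G (map f [0..<Suc n])"
      using N[of "Suc (max m N)"] \<open>f \<in> S\<close> by (intro exI[of _ "Suc (max m N)"]) simp
  qed
qed

lemma guesser_eq_Union_eventually:
  assumes "guesser G S"
  shows "S = (\<Union>m. {f. \<forall>n>m. G (map f [0..<Suc n])})"
proof (intro set_eqI iffI)
  fix f
  obtain N where N: "\<And>n. n \<ge> N \<Longrightarrow> G (map f [0..<Suc n]) = (f \<in> S)"
    using assms unfolding guesser_iff_eventually eventually_sequentially by blast
  show "f \<in> S" if "f \<in> (\<Union>m. {f. \<forall>n>m. G (map f [0..<Suc n])})"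
  proof -
    from that obtain m where "\<forall>n>m. G (map f [0..<Suc n])"
      by blast
    then have "G (map f [0..<Suc (Suc (max m N))])"
      by (simp del: upt_Suc)
    with N[of "Suc (max m N)"] show ?thesis
      by simp
  qed
  show "f \<in> (\<Union>m. {f. \<forall>n>m. G (map f [0..<Suc n])})" if "f \<in> S"
    using that N by (auto intro!: exI[of _ N])
qed

lemma guessable_imp_baire_Delta02:
  assumes "guessable S"
  shows "baire_Delta02 S"
proof -
  obtain G where G: "guesser G S"
    using assms unfolding guessable_def by blast
  have "baire_G_delta S"
    unfolding baire_G_delta_def
    by (rule exI[of _ "\<lambda>m. {f. \<exists>n>m. G (map f [0..<Suc n])}"])
      (simp add: baire_open_exists_prefix guesser_eq_Inter_frequently[OF G, symmetric] del: upt_Suc)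
  moreover have "baire_F_sigma S"
    unfolding baire_F_sigma_def
    by (rule exI[of _ "\<lambda>m. {f. \<forall>n>m. G (map f [0..<Suc n])}"])
      (simp add: baire_closed_forall_prefix guesser_eq_Union_eventually[OF G, symmetric] del: upt_Suc)
  ultimately show ?thesis
    unfolding baire_Delta02_def ..
qed

lemma basic_open_prefix_subset:
  assumes "f \<in> basic_open s" "length s \<le> n"
  shows "basic_open (map f [0..<n]) \<subseteq> basic_open s"
  using assms unfolding basic_open_def by auto

lemma eventually_prefix_disjoint_closed:
  assumes "baire_closed E" "f \<notin> E"
  shows "\<forall>\<^sub>F n in sequentially. basic_open (map f [0..<n]) \<inter> E = {}"
proof -
  obtain B where B: "- E = \<Union> (basic_open ` B)"
    using assms(1) unfolding baire_closed_def baire_open_def by blast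
  with assms(2) obtain s where "s \<in> B" "f \<in> basic_open s"
    by auto
  then have "basic_open (map f [0..<n]) \<subseteq> - E" if "n \<ge> length s" for n
    using basic_open_prefix_subset[OF _ that] B by blast
  then show ?thesis
    unfolding eventually_sequentially by blast
qed

lemma eventually_Least_meeting_prefix:
  fixes E :: "nat \<Rightarrow> (nat \<Rightarrow> nat) set"
  assumes closed: "\<And>k. baire_closed (E k)" and "f \<in> E k"
  shows "\<forall>\<^sub>F n in sequentially.
           (LEAST k. basic_open (map f [0..<n]) \<inter> E k \<noteq> {}) = (LEAST k. f \<in> E k)"
proof -
  define k0 where "k0 = (LEAST k. f \<in> E k)"
  have "f \<in> E k0"
    unfolding k0_def using assms(2) by (rule LeastI)
  have "f \<notin> E k" if "k < k0" for k
    using that not_less_Least unfolding k0_def by blast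
  then have "\<forall>\<^sub>F n in sequentially. \<forall>k\<in>{..<k0}. basic_open (map f [0..<n]) \<inter> E k = {}"
    by (intro eventually_ball_finite) (auto intro: eventually_prefix_disjoint_closed closed)
  then show ?thesis
    unfolding k0_def[symmetric]
  proof (rule eventually_mono)
    fix n
    assume "\<forall>k\<in>{..<k0}. basic_open (map f [0..<n]) \<inter> E k = {}"
    moreover have "basic_open (map f [0..<n]) \<inter> E k0 \<noteq> {}"
      using \<open>f \<in> E k0\<close> mem_basic_open_prefix by blast
    ultimately show "(LEAST k. basic_open (map f [0..<n]) \<inter> E k \<noteq> {}) = k0"
      by (intro Least_equality) (auto simp: not_less[symmetric])
  qed
qed

lemma guessable_if_closed_cover_deciding:
  fixes E :: "nat \<Rightarrow> (nat \<Rightarrow> nat) set"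
  assumes closed: "\<And>k. baire_closed (E k)"
    and cover: "\<And>f. \<exists>k. f \<in> E k"
    and decides: "\<And>k. E k \<subseteq> S \<or> E k \<inter> S = {}"
  shows "guessable S"
proof -
  define G where "G s = (E (LEAST k. basic_open s \<inter> E k \<noteq> {}) \<subseteq> S)" for s
  have "guesser G S"
    unfolding guesser_iff_eventually
  proof
    fix f
    define k0 where "k0 = (LEAST k. f \<in> E k)"
    have "f \<in> E k0"
      unfolding k0_def using cover by (rule LeastI_ex)
    then have decided: "(E k0 \<subseteq> S) = (f \<in> S)"
      using decides by blast
    obtain k where "f \<in> E k"
      using cover by blast
    then have "\<forall>\<^sub>F n in sequentially. (LEAST k. basic_open (map f [0..<n]) \<inter> E k \<noteq> {}) = k0"
      unfolding k0_def by (rule eventually_Least_meeting_prefix[OF closed])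
    then have "\<forall>\<^sub>F n in sequentially.
                 (LEAST k. basic_open (map f [0..<Suc n]) \<inter> E k \<noteq> {}) = k0"
      by (rule eventually_sequentially_Suc[
            where P = "\<lambda>n. (LEAST k. basic_open (map f [0..<n]) \<inter> E k \<noteq> {}) = k0",
            THEN iffD2])
    then show "\<forall>\<^sub>F n in sequentially. G (map f [0..<Suc n]) = (f \<in> S)"
      unfolding G_def by (rule eventually_mono) (simp only: decided)
  qed
  then show ?thesis
    unfolding guessable_def by blast
qed

lemma baire_Delta02_imp_guessable:
  assumes "baire_Delta02 S"
  shows "guessable S"
proof -
  obtain U C :: "nat \<Rightarrow> (nat \<Rightarrow> nat) set"
    where U: "\<And>i. baire_open (U i)" "S = (\<Inter>i. U i)"
      and C: "\<And>i. baire_closed (C i)" "S = (\<Union>i. C i)"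
    using assms unfolding baire_Delta02_def baire_G_delta_def baire_F_sigma_def by blast
  define E :: "nat \<Rightarrow> (nat \<Rightarrow> nat) set"
    where "E k = (if even k then C (k div 2) else - U (k div 2))" for k
  show ?thesis
  proof (rule guessable_if_closed_cover_deciding)
    show "baire_closed (E k)" for k
      using U(1) C(1) unfolding E_def baire_closed_def by simp
    show "E k \<subseteq> S \<or> E k \<inter> S = {}" for k
    proof (cases "even k")
      case True
      then have "E k \<subseteq> S"
        unfolding E_def C(2) by auto
      then show ?thesis ..
    next
      case False
      then have "E k \<inter> S = {}"
        unfolding E_def U(2) by auto
      then show ?thesis ..
    qed
    show "\<exists>k. f \<in> E k" for f
    proof (cases "f \<in> S")
      case True
      then obtain i where "f \<in> C i"
        using C(2) by blast
      then have "f \<in> E (2 * i)"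
        unfolding E_def by simp
      then show ?thesis ..
    next
      case False
      then obtain i where "f \<notin> U i"
        using U(2) by blast
      then have "f \<in> E (2 * i + 1)"
        unfolding E_def by simp
      then show ?thesis ..
    qed
  qed
qed

theorem theorem16:
  fixes S :: "(nat \<Rightarrow> nat) set"
  shows "guessable S \<longleftrightarrow> baire_Delta02 S"
  using guessable_imp_baire_Delta02 baire_Delta02_imp_guessable ..

end
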